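(* Let $0<a<1$ and let $\tau_1,\tau_2:[0,a]\to[0,1]$ be continuously differentiable, strictly increasing maps with $\tau_i(0)=0$, $\tau_i(a)=1$, $\tau_1(x)\le x/a$ and $\tau_2(x)\ge x/a$, such that $\tau_{21}=\tau_2^{-1}\circ\tau_1:[0,a]\to[0,a]$ is continuously differentiable and satisfies $\tau_{21}(x)<x$ for $x\in(0,a)$. Let $0<\widehat a<a$ and $\sigma<1$ be such that $\tau_{21}'(x)\le\sigma$ for $x\in[0,\widehat a]$. Then the functional equation $$p(x)=p(\tau_{21}(x))\,\tau_{21}'(x)-\left[\tau_{21}'(x)-a\,\tau_1'(x)\right],\qquad x\in[0,\widehat a],$$ has exactly one solution $p\in L^\infty[0,\widehat a]$ (bounded functions on $[0,\widehat a]$). *)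

theory Defs
  imports "HOL-Analysis.Analysis"
begin

text \<open>Solutions of the functional equation on [0, ah]: bounded, Lebesgue measurable
  functions (representatives of elements of L-infinity) satisfying the equation
  at every point of [0, ah].\<close>
definition fe_solution ::
  "real \<Rightarrow> real \<Rightarrow> (real \<Rightarrow> real) \<Rightarrow> (real \<Rightarrow> real) \<Rightarrow> (real \<Rightarrow> real) \<Rightarrow> (real \<Rightarrow> real) \<Rightarrow> bool"
  where "fe_solution a ah t21 d21 d1 p \<longleftrightarrow>
     bounded (p ` {0..ah}) \<and>
     p \<in> borel_measurable (restrict_space lebesgue {0..ah}) \<and>
     (\<forall>x\<in>{0..ah}. p x = p (t21 x) * d21 x - (d21 x - a * d1 x))"

end

theory Submission
  imports Defs
begin

text \<open>Write \<open>g = \<tau>\<^sub>2\<^sub>1' - a \<tau>\<^sub>1'\<close>. The map \<open>\<tau>\<^sub>2\<^sub>1\<close> is monotone, fixes \<open>0\<close>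
  and lies below the diagonal, so it maps \<open>[0, ah]\<close> into itself, and there its
  derivative lies in \<open>[0, \<sigma>]\<close>. The equation \<open>p = (p \<circ> \<tau>\<^sub>2\<^sub>1) \<tau>\<^sub>2\<^sub>1' - g\<close> is therefore
  a contraction in the sup norm. Unrolling it gives
  \<open>p x = - (\<Sum>n. g (\<tau>\<^sub>2\<^sub>1\<^sup>n x) \<Prod>k<n. \<tau>\<^sub>2\<^sub>1' (\<tau>\<^sub>2\<^sub>1\<^sup>k x))\<close>,
  a series dominated by \<open>sup |g| \<sigma>\<^sup>n\<close>: it converges uniformly, so this solution is
  continuous and in particular measurable. The difference of two bounded solutions is
  bounded by a constant times \<open>\<sigma>\<^sup>n\<close> for every \<open>n\<close>, hence vanishes.\<close>

lemma has_real_derivative_nonneg_if_mono_on: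
  fixes f :: "real \<Rightarrow> real"
  assumes mono: "mono_on {a..b} f"
    and der: "(f has_real_derivative D) (at x within {a..b})" and x: "a \<le> x" "x < b"
  shows "0 \<le> D"
proof -
  have "(f has_real_derivative D) (at x within {x..b})"
    by (rule has_field_derivative_subset[OF der]) (use x in auto)
  then have "((\<lambda>y. (f y - f x) / (y - x)) \<longlongrightarrow> D) (at_right x)"
    using x by (simp add: has_field_derivative_iff at_within_Icc_at_right)
  moreover have "\<forall>\<^sub>F y in at_right x. 0 \<le> (f y - f x) / (y - x)"
    unfolding eventually_at_right_field
    using x mono_onD[OF mono] by (intro exI[of _ b]) auto
  ultimately show ?thesis
    by (rule tendsto_lowerbound) simp
qed

lemma mono_on_the_inv_into:
  fixes f :: "'a::linorder \<Rightarrow> 'b::linorder"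
  assumes "strict_mono_on A f"
  shows "mono_on (f ` A) (the_inv_into A f)"
proof (rule mono_onI, rule ccontr)
  fix u v assume uv: "u \<in> f ` A" "v \<in> f ` A" "u \<le> v"
    and "\<not> the_inv_into A f u \<le> the_inv_into A f v"
  then have "f (the_inv_into A f v) < f (the_inv_into A f u)"
    using assms strict_mono_on_imp_inj_on
    by (intro strict_mono_onD[OF assms]) (auto intro: the_inv_into_into)
  then show False
    using uv assms strict_mono_on_imp_inj_on f_the_inv_into_f by fastforce
qed

lemma the_inv_into_comp_Icc:
  fixes f g :: "real \<Rightarrow> real"
  assumes f: "continuous_on {a..b} f" "strict_mono_on {a..b} f"
    and g: "mono_on {a..b} g" "g ` {a..b} \<subseteq> {f a..f b}"
  defines "h \<equiv> \<lambda>x. the_inv_into {a..b} f (g x)"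
  shows "h ` {a..b} \<subseteq> {a..b}" and "mono_on {a..b} h"
    and "a \<le> b \<Longrightarrow> g a = f a \<Longrightarrow> h a = a"
proof -
  have f_inj: "inj_on f {a..b}"
    using f(2) by (rule strict_mono_on_imp_inj_on)
  have g_onto: "g x \<in> f ` {a..b}" if x: "x \<in> {a..b}" for x
  proof -
    have "f a \<le> g x" "g x \<le> f b" using g(2) x by (auto simp: image_subset_iff)
    then obtain z where "z \<in> {a..b}" "f z = g x"
      using IVT'[of f a "g x" b] f(1) x by auto
    then show ?thesis by (metis image_eqI)
  qed
  show "h ` {a..b} \<subseteq> {a..b}"
    unfolding h_def using the_inv_into_into[OF f_inj g_onto order_refl] by auto
  show "mono_on {a..b} h"
    using mono_onD[OF mono_on_the_inv_into[OF f(2)]] g_onto mono_onD[OF g(1)]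
    unfolding h_def by (intro mono_onI) auto
  show "h a = a" if "a \<le> b" "g a = f a"
    unfolding h_def \<open>g a = f a\<close> using \<open>a \<le> b\<close> by (intro the_inv_into_f_f[OF f_inj]) simp
qed

lemma image_Icc_subset_if_below_diagonal:
  fixes T :: "real \<Rightarrow> real"
  assumes "T ` {a..b} \<subseteq> {a..b}" "T a = a" "\<forall>x\<in>{a<..<b}. T x < x" "c < b"
  shows "T ` {a..c} \<subseteq> {a..c}"
proof safe
  fix x assume x: "x \<in> {a..c}"
  show "T x \<in> {a..c}"
  proof (cases "x = a")
    case False
    then have "T x < x" using x assms(3,4) by auto
    then show ?thesis using x assms(1,4) by fastforce
  qed (use assms(2) x in simp)
qed

locale contractive_weighted_composition =
  fixes S :: "'a set" and T :: "'a \<Rightarrow> 'a" and w :: "'a \<Rightarrow> real" and \<sigma> :: real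
  assumes self_map: "T ` S \<subseteq> S"
    and abs_weight_le: "\<And>x. x \<in> S \<Longrightarrow> \<bar>w x\<bar> \<le> \<sigma>"
    and contraction: "\<sigma> < 1"
begin

definition orbit_weight :: "nat \<Rightarrow> 'a \<Rightarrow> real"
  where "orbit_weight n x = (\<Prod>k<n. w ((T ^^ k) x))"

definition series_solution :: "('a \<Rightarrow> real) \<Rightarrow> 'a \<Rightarrow> real"
  where "series_solution g x = - (\<Sum>n. g ((T ^^ n) x) * orbit_weight n x)"

lemma funpow_mem: "x \<in> S \<Longrightarrow> (T ^^ n) x \<in> S"
  using self_map by (induction n) auto

lemma contraction_factor_nonneg: "x \<in> S \<Longrightarrow> 0 \<le> \<sigma>"
  using abs_weight_le[of x] by linarith

lemma orbit_weight_Suc: "orbit_weight (Suc n) x = w x * orbit_weight n (T x)"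
  unfolding orbit_weight_def prod.lessThan_Suc_shift by (simp add: funpow_swap1)

lemma abs_orbit_weight_le:
  assumes "x \<in> S" shows "\<bar>orbit_weight n x\<bar> \<le> \<sigma> ^ n"
proof -
  have "\<bar>orbit_weight n x\<bar> = (\<Prod>k<n. \<bar>w ((T ^^ k) x)\<bar>)"
    by (simp add: orbit_weight_def abs_prod)
  also have "\<dots> \<le> (\<Prod>k<n. \<sigma>)"
    using assms by (intro prod_mono) (simp add: abs_weight_le funpow_mem)
  finally show ?thesis by simp
qed

context
  fixes g :: "'a \<Rightarrow> real" and G :: real
  assumes abs_g_le: "\<And>x. x \<in> S \<Longrightarrow> \<bar>g x\<bar> \<le> G"
begin

lemma abs_series_term_le:
  assumes "x \<in> S" shows "\<bar>g ((T ^^ n) x) * orbit_weight n x\<bar> \<le> G * \<sigma> ^ n"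
proof -
  have "0 \<le> G" using abs_g_le[OF assms] by linarith
  then show ?thesis
    unfolding abs_mult using assms
    by (intro mult_mono) (auto simp: abs_g_le funpow_mem abs_orbit_weight_le)
qed

lemma summable_majorant:
  assumes "x \<in> S" shows "summable (\<lambda>n. G * \<sigma> ^ n)"
  using contraction_factor_nonneg[OF assms] contraction
  by (intro summable_mult summable_geometric) simp

lemma summable_abs_series:
  assumes "x \<in> S" shows "summable (\<lambda>n. \<bar>g ((T ^^ n) x) * orbit_weight n x\<bar>)"
  by (rule summable_comparison_test'[OF summable_majorant[OF assms]])
    (simp add: abs_series_term_le[OF assms])

lemma summable_series:
  assumes "x \<in> S" shows "summable (\<lambda>n. g ((T ^^ n) x) * orbit_weight n x)"
  using summable_abs_series[OF assms] by (rule summable_rabs_cancel)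

lemma abs_series_solution_le:
  assumes "x \<in> S" shows "\<bar>series_solution g x\<bar> \<le> G / (1 - \<sigma>)"
proof -
  have "\<bar>series_solution g x\<bar> \<le> (\<Sum>n. \<bar>g ((T ^^ n) x) * orbit_weight n x\<bar>)"
    unfolding series_solution_def abs_minus_cancel
    using summable_abs_series[OF assms] by (rule summable_rabs)
  also have "\<dots> \<le> (\<Sum>n. G * \<sigma> ^ n)"
    using abs_series_term_le[OF assms] summable_abs_series[OF assms] summable_majorant[OF assms]
    by (rule suminf_le)
  also have "\<dots> = G / (1 - \<sigma>)"
    using contraction_factor_nonneg[OF assms] contraction
    by (simp add: suminf_mult suminf_geometric)
  finally show ?thesis .
qed

lemma series_solution_eq:
  assumes x: "x \<in> S"
  shows "series_solution g x = series_solution g (T x) * w x - g x"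
proof -
  have Tx: "T x \<in> S" using x self_map by auto
  have "series_solution g (T x) * w x =
      - (\<Sum>n. g ((T ^^ n) (T x)) * orbit_weight n (T x) * w x)"
    unfolding series_solution_def using suminf_mult2[OF summable_series[OF Tx]] by simp
  also have "\<dots> = - (\<Sum>n. g ((T ^^ Suc n) x) * orbit_weight (Suc n) x)"
    by (simp add: orbit_weight_Suc funpow_swap1 mult_ac)
  also have "\<dots> = series_solution g x + g x"
    unfolding series_solution_def suminf_split_head[OF summable_series[OF x]]
    by (simp add: orbit_weight_def)
  finally show ?thesis by simp
qed

end

lemma bounded_homogeneous_solution_eq_0:
  assumes bounded: "bounded (r ` S)" and hom: "\<And>x. x \<in> S \<Longrightarrow> r x = r (T x) * w x"
    and x: "x \<in> S"
  shows "r x = 0"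
proof -
  obtain M where M: "\<And>y. y \<in> S \<Longrightarrow> \<bar>r y\<bar> \<le> M"
    using bounded unfolding bounded_real by auto
  have "\<bar>r y\<bar> \<le> \<sigma> ^ n * M" if "y \<in> S" for n y
    using that
  proof (induction n arbitrary: y)
    case 0 then show ?case using M by simp
  next
    case (Suc n)
    have "\<bar>r y\<bar> = \<bar>r (T y)\<bar> * \<bar>w y\<bar>"
      using hom[OF Suc.prems] by (simp add: abs_mult)
    also have "\<dots> \<le> (\<sigma> ^ n * M) * \<sigma>"
      using Suc.prems self_map abs_weight_le[OF Suc.prems] M[OF Suc.prems]
      by (intro mult_mono Suc.IH) auto
    finally show ?case by (simp add: mult_ac)
  qed
  moreover have "(\<lambda>n. \<sigma> ^ n * M) \<longlonglongrightarrow> 0"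
    using contraction_factor_nonneg[OF x] contraction
    by (intro tendsto_mult_left_zero LIMSEQ_power_zero) auto
  ultimately have "\<bar>r x\<bar> \<le> 0"
    using x by (intro LIMSEQ_le_const) auto
  then show ?thesis by simp
qed

lemma bounded_solution_unique:
  assumes "bounded (p ` S)" "bounded (q ` S)"
    and "\<And>x. x \<in> S \<Longrightarrow> p x = p (T x) * w x - g x"
    and "\<And>x. x \<in> S \<Longrightarrow> q x = q (T x) * w x - g x"
    and "x \<in> S"
  shows "p x = q x"
proof -
  have "p x - q x = 0"
  proof (rule bounded_homogeneous_solution_eq_0)
    show "bounded ((\<lambda>x. p x - q x) ` S)"
      using assms(1,2) by (rule bounded_minus_comp)
    show "p y - q y = (p (T y) - q (T y)) * w y" if "y \<in> S" for y
      using assms(3,4)[OF that] by (simp add: algebra_simps)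
  qed fact
  then show ?thesis by simp
qed

end

lemma contractive_weighted_composition_Icc:
  fixes T T' :: "real \<Rightarrow> real"
  assumes T: "T ` {a..b} \<subseteq> {a..b}" "mono_on {a..b} T" "T a = a" "\<forall>x\<in>{a<..<b}. T x < x"
    and T': "\<forall>x\<in>{a..b}. (T has_real_derivative T' x) (at x within {a..b})"
    and "c < b" "\<sigma> < 1" and T'_le: "\<forall>x\<in>{a..c}. T' x \<le> \<sigma>"
  shows "contractive_weighted_composition {a..c} T T' \<sigma>"
proof
  show "T ` {a..c} \<subseteq> {a..c}"
    using T(1,3,4) \<open>c < b\<close> by (rule image_Icc_subset_if_below_diagonal)
  show "\<bar>T' x\<bar> \<le> \<sigma>" if x: "x \<in> {a..c}" for x
  proof -
    have "0 \<le> T' x"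
      by (rule has_real_derivative_nonneg_if_mono_on[OF T(2), where x = x])
        (use T' x \<open>c < b\<close> in auto)
    then show ?thesis using T'_le x by simp
  qed
qed fact

lemma continuous_on_funpow:
  fixes f :: "'a::topological_space \<Rightarrow> 'a"
  assumes "continuous_on S f" "f ` S \<subseteq> S"
  shows "continuous_on S (f ^^ n)"
proof (induction n)
  case (Suc n)
  have "(f ^^ n) ` S \<subseteq> S" using assms(2) by (induction n) auto
  then have "continuous_on S (f \<circ> (f ^^ n))"
    by (intro continuous_on_compose Suc continuous_on_subset[OF assms(1)])
  then show ?case by simp
qed simp

lemma continuous_on_series_solution:
  fixes S :: "'a::topological_space set"
  assumes "contractive_weighted_composition S T w \<sigma>"
    and T: "continuous_on S T" and w: "continuous_on S w"
    and g: "continuous_on S g" and G: "\<And>x. x \<in> S \<Longrightarrow> \<bar>g x\<bar> \<le> G"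
  shows "continuous_on S (contractive_weighted_composition.series_solution T w g)"
proof (cases "S = {}")
  case False
  interpret contractive_weighted_composition S T w \<sigma> by fact
  obtain x0 where "x0 \<in> S" using False by blast
  define u where "u n x = g ((T ^^ n) x) * orbit_weight n x" for n x
  have u_cont: "continuous_on S (u n)" for n
  proof -
    have "continuous_on S (\<lambda>x. f ((T ^^ k) x))"
      if "continuous_on S f" for f :: "'a \<Rightarrow> real" and k
      using continuous_on_funpow[OF T self_map] funpow_mem that
      by (intro continuous_on_compose2[OF that]) auto
    then show ?thesis
      unfolding u_def orbit_weight_def using g w by (intro continuous_intros) auto
  qed
  have "uniform_limit S (\<lambda>n x. \<Sum>i<n. u i x) (\<lambda>x. \<Sum>i. u i x) sequentially"
  proof (rule Weierstrass_m_test[where M = "\<lambda>n. G * \<sigma> ^ n"])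
    show "norm (u n x) \<le> G * \<sigma> ^ n" if "x \<in> S" for n x
      using abs_series_term_le[where g = g and G = G, OF G that] by (simp add: u_def)
    show "summable (\<lambda>n. G * \<sigma> ^ n)"
      using summable_majorant[where g = g and G = G, OF G \<open>x0 \<in> S\<close>] .
  qed
  then have "continuous_on S (\<lambda>x. \<Sum>i. u i x)"
    by (rule uniform_limit_theorem[rotated])
      (simp_all add: always_eventually continuous_on_sum u_cont)
  then show ?thesis
    unfolding series_solution_def u_def by (rule continuous_on_minus)
qed simp

lemma ex_bounded_continuous_solution:
  fixes S :: "'a::topological_space set"
  assumes contractive: "contractive_weighted_composition S T w \<sigma>" and "compact S"
    and T: "continuous_on S T" and w: "continuous_on S w" and g: "continuous_on S g"
  shows "\<exists>p. continuous_on S p \<and> bounded (p ` S) \<and> (\<forall>x\<in>S. p x = p (T x) * w x - g x)"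
proof -
  interpret contractive_weighted_composition S T w \<sigma> by fact
  have "bounded (g ` S)"
    using g \<open>compact S\<close> by (intro compact_imp_bounded compact_continuous_image)
  then obtain G where G: "\<And>x. x \<in> S \<Longrightarrow> \<bar>g x\<bar> \<le> G"
    unfolding bounded_real by auto
  have "bounded (series_solution g ` S)"
    unfolding bounded_real using abs_series_solution_le[where g = g and G = G, OF G] by blast
  moreover have "continuous_on S (series_solution g)"
    using contractive T w g G by (rule continuous_on_series_solution)
  ultimately show ?thesis
    using series_solution_eq[where g = g and G = G, OF G] by blast
qed

theorem proposition2:
  fixes a ah \<sigma> :: real and t1 t2 d1 d2 d21 :: "real \<Rightarrow> real"
  defines "t21 \<equiv> (\<lambda>x. the_inv_into {0..a} t2 (t1 x))"
  assumes "0 < a" "a < 1"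
    and "\<forall>x\<in>{0..a}. t1 x \<in> {0..1}" "\<forall>x\<in>{0..a}. t2 x \<in> {0..1}"
    and "\<forall>x\<in>{0..a}. (t1 has_real_derivative d1 x) (at x within {0..a})" "continuous_on {0..a} d1"
    and "\<forall>x\<in>{0..a}. (t2 has_real_derivative d2 x) (at x within {0..a})" "continuous_on {0..a} d2"
    and "strict_mono_on {0..a} t1" "strict_mono_on {0..a} t2"
    and "t1 0 = 0" "t1 a = 1" "t2 0 = 0" "t2 a = 1"
    and "\<forall>x\<in>{0..a}. t1 x \<le> x / a" "\<forall>x\<in>{0..a}. t2 x \<ge> x / a"
    and "\<forall>x\<in>{0..a}. (t21 has_real_derivative d21 x) (at x within {0..a})" "continuous_on {0..a} d21"
    and "\<forall>x\<in>{0<..<a}. t21 x < x"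
    and "0 < ah" "ah < a" "\<sigma> < 1" "\<forall>x\<in>{0..ah}. d21 x \<le> \<sigma>"
  shows "\<exists>p. fe_solution a ah t21 d21 d1 p \<and>
           (\<forall>q. fe_solution a ah t21 d21 d1 q \<longrightarrow> (\<forall>x\<in>{0..ah}. q x = p x))"
proof -
  \<comment> \<open>Not needed: \<open>a < 1\<close>, the range of \<open>t2\<close>, \<open>t1 a = 1\<close>, the bounds by \<open>x / a\<close>,
    and of \<open>t2\<close>'s derivative only its existence (for continuity).\<close>
  note a_pos = assms(2) and t1_range = assms(4) and d1_cont = assms(7) and t2_deriv = assms(8)
    and t1_mono = assms(10) and t2_mono = assms(11) and t1_0 = assms(12) and t2_0 = assms(14)
    and t2_a = assms(15) and t21_deriv = assms(18) and d21_cont = assms(19)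
    and ah = assms(21,22)
  define S where "S = {0..ah}"
  have S_sub: "S \<subseteq> {0..a}" using ah by (auto simp: S_def)
  have t2_cont: "continuous_on {0..a} t2"
    using t2_deriv by (intro DERIV_continuous_on) auto
  have "t1 ` {0..a} \<subseteq> {t2 0..t2 a}"
    using t1_range t2_0 t2_a by auto
  note t21_props = the_inv_into_comp_Icc[OF t2_cont t2_mono
      strict_mono_on_imp_mono_on[OF t1_mono] this]
  have contractive: "contractive_weighted_composition S t21 d21 \<sigma>"
    unfolding S_def
  proof (rule contractive_weighted_composition_Icc)
    show "t21 ` {0..a} \<subseteq> {0..a}" "mono_on {0..a} t21"
      unfolding t21_def by (fact t21_props(1,2))+
    show "t21 0 = 0"
      unfolding t21_def using a_pos t1_0 t2_0 by (intro t21_props(3)) simp_all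
  qed fact+
  have "(t21 has_real_derivative d21 x) (at x within S)" if "x \<in> S" for x
    using S_sub that t21_deriv has_field_derivative_subset by blast
  then have t21_cont: "continuous_on S t21"
    by (rule DERIV_continuous_on)
  note d21_cont_S = continuous_on_subset[OF d21_cont S_sub]
  have "continuous_on S (\<lambda>x. d21 x - a * d1 x)"
    using d21_cont_S continuous_on_subset[OF d1_cont S_sub] by (intro continuous_intros)
  moreover have "compact S"
    by (simp add: S_def)
  ultimately obtain p where p_cont: "continuous_on S p" and "bounded (p ` S)"
    and "\<forall>x\<in>S. p x = p (t21 x) * d21 x - (d21 x - a * d1 x)"
    using ex_bounded_continuous_solution[OF contractive _ t21_cont d21_cont_S] by blast
  moreover have "p \<in> borel_measurable (lebesgue_on S)"
    using p_cont by (rule continuous_imp_measurable_on_sets_lebesgue) (simp add: S_def)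
  ultimately have p_solution: "fe_solution a ah t21 d21 d1 p"
    unfolding fe_solution_def S_def by blast
  show ?thesis
  proof (intro exI conjI allI impI ballI)
    fix q x assume "fe_solution a ah t21 d21 d1 q" "x \<in> {0..ah}"
    then show "q x = p x"
      using p_solution contractive_weighted_composition.bounded_solution_unique[OF contractive,
          where p = q and q = p and g = "\<lambda>x. d21 x - a * d1 x" and x = x]
      unfolding fe_solution_def S_def by auto
  qed (fact p_solution)
qed

end
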